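(* Let $\mathcal{B}$ be an AF $C^*$-algebra and $\mathcal{A}$ a canonical subalgebra of $\mathcal{B}$. If $\delta:\mathcal{A}\to\mathcal{B}$ is a bounded linear map with $(m+n+l)\delta(A^2)=m\delta(A)A+nA\delta(A)+lA\delta(I)A$ for all $A\in\mathcal{A}$, then $\delta(AB)=\delta(A)B=A\delta(B)$ for all $A,B\in\mathcal{A}$.
   Context: Fixed integers $m,n,l\ge 0$ satisfy $m+l\ge1$ and $n+l\ge1$. A unital $C^*$-algebra $\mathcal{B}$ is AF if it contains an increasing chain $\mathcal{B}_1\subseteq\mathcal{B}_2\subseteq\cdots$ of finite-dimensional $C^*$-subalgebras, each containing the unit $I$, whose union is norm dense. A canonical subalgebra $\mathcal{A}$ of $\mathcal{B}$ is a norm-closed subalgebra such that, for such a chain with compatible systems of matrix units (each $\mathcal{B}_k\cong M_{n_1}(\mathbb{C})\oplus\cdots\oplus M_{n_r}(\mathbb{C})$), each $\mathcal{A}_k=\mathcal{A}\cap\mathcal{B}_k$ is a CSL subalgebra of $\mathcal{B}_k$ (containing the diagonal matrix units and spanned by the matrix units it contains) and $\bigcup_k\mathcal{A}_k$ is norm dense in $\mathcal{A}$. *)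

theory Defs
  imports "HOL-Analysis.Analysis"
begin

text \<open>Complex scalar multiplication is an explicit
  operation cmult compatible with the real scalar multiplication of the normed algebra.\<close>

class cstar_algebra = banach + real_normed_algebra_1 +
  fixes cmult :: "complex \<Rightarrow> 'a \<Rightarrow> 'a"
    and adj :: "'a \<Rightarrow> 'a"
  assumes cmult_add_right: "cmult a (x + y) = cmult a x + cmult a y"
    and cmult_add_left: "cmult (a + b) x = cmult a x + cmult b x"
    and cmult_cmult: "cmult a (cmult b x) = cmult (a * b) x"
    and cmult_one: "cmult 1 x = x"
    and scaleR_cmult: "scaleR r x = cmult (complex_of_real r) x"
    and norm_cmult: "norm (cmult a x) = cmod a * norm x"
    and mult_cmult_left: "cmult a x * y = cmult a (x * y)"
    and mult_cmult_right: "x * cmult a y = cmult a (x * y)"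
    and adj_add: "adj (x + y) = adj x + adj y"
    and adj_cmult: "adj (cmult a x) = cmult (cnj a) (adj x)"
    and adj_mult: "adj (x * y) = adj y * adj x"
    and adj_adj: "adj (adj x) = x"
    and cstar_identity: "norm (adj x * x) = norm x ^ 2"

definition cspan :: "'a::cstar_algebra set \<Rightarrow> 'a set" where
  "cspan S = {x. \<exists>F c. finite F \<and> F \<subseteq> S \<and> x = (\<Sum>s\<in>F. cmult (c s) s)}"

definition complex_subalgebra :: "'a::cstar_algebra set \<Rightarrow> bool" where
  "complex_subalgebra A \<longleftrightarrow> 0 \<in> A \<and>
     (\<forall>x\<in>A. \<forall>y\<in>A. x + y \<in> A) \<and>
     (\<forall>c. \<forall>x\<in>A. cmult c x \<in> A) \<and>
     (\<forall>x\<in>A. \<forall>y\<in>A. x * y \<in> A)"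

text \<open>Index set of a system of matrix units for
  M_{d 0}(C) + ... + M_{d (r-1)}(C): triples (s,i,j) with s < r, i,j < d s.\<close>

definition mu_idx :: "nat \<Rightarrow> (nat \<Rightarrow> nat) \<Rightarrow> (nat \<times> nat \<times> nat) set" where
  "mu_idx r d = {(s, i, j). s < r \<and> i < d s \<and> j < d s}"

definition mu_diag :: "nat \<Rightarrow> (nat \<Rightarrow> nat) \<Rightarrow> (nat \<times> nat \<times> nat) set" where
  "mu_diag r d = {(s, i, j). s < r \<and> i < d s \<and> j = i}"

text \<open>e is a (unital) system of matrix units of type (d 0, ..., d (r-1)); its complex span
  is then a finite-dimensional C*-subalgebra containing I and *-isomorphic to
  M_{d 0}(C) + ... + M_{d (r-1)}(C).\<close>

definition matrix_units :: "nat \<Rightarrow> (nat \<Rightarrow> nat) \<Rightarrow> (nat \<times> nat \<times> nat \<Rightarrow> 'a::cstar_algebra) \<Rightarrow> bool" where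
  "matrix_units r d e \<longleftrightarrow>
     (\<forall>s<r. 1 \<le> d s) \<and>
     (\<forall>p\<in>mu_idx r d. e p \<noteq> 0) \<and>
     (\<forall>s i j s' i' j'. (s, i, j) \<in> mu_idx r d \<longrightarrow> (s', i', j') \<in> mu_idx r d \<longrightarrow>
         e (s, i, j) * e (s', i', j') = (if s = s' \<and> j = i' then e (s, i, j') else 0)) \<and>
     (\<forall>s i j. (s, i, j) \<in> mu_idx r d \<longrightarrow> adj (e (s, i, j)) = e (s, j, i)) \<and>
     sum e (mu_diag r d) = 1"

text \<open>An AF presentation: an increasing chain of finite-dimensional C*-subalgebras
  B_k = cspan (e k ` mu_idx (r k) (d k)), each unital (sum of diagonal units is I),
  with compatible systems of matrix units (every matrix unit of B_k is a sum of matrix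
  units of B_(k+1)), and norm-dense union.\<close>

definition af_block :: "(nat \<Rightarrow> nat) \<Rightarrow> (nat \<Rightarrow> nat \<Rightarrow> nat) \<Rightarrow>
    (nat \<Rightarrow> nat \<times> nat \<times> nat \<Rightarrow> 'a::cstar_algebra) \<Rightarrow> nat \<Rightarrow> 'a set" where
  "af_block r d e k = cspan (e k ` mu_idx (r k) (d k))"

definition af_system :: "(nat \<Rightarrow> nat) \<Rightarrow> (nat \<Rightarrow> nat \<Rightarrow> nat) \<Rightarrow>
    (nat \<Rightarrow> nat \<times> nat \<times> nat \<Rightarrow> 'a::cstar_algebra) \<Rightarrow> bool" where
  "af_system r d e \<longleftrightarrow>
     (\<forall>k. matrix_units (r k) (d k) (e k)) \<and>
     (\<forall>k. af_block r d e k \<subseteq> af_block r d e (Suc k)) \<and>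
     (\<forall>k. \<forall>p\<in>mu_idx (r k) (d k). \<exists>F. F \<subseteq> mu_idx (r (Suc k)) (d (Suc k)) \<and>
          e k p = sum (e (Suc k)) F) \<and>
     closure (\<Union>k. af_block r d e k) = UNIV"

definition AF_algebra :: "'a::cstar_algebra itself \<Rightarrow> bool" where
  "AF_algebra _ \<longleftrightarrow> (\<exists>r d (e :: nat \<Rightarrow> nat \<times> nat \<times> nat \<Rightarrow> 'a). af_system r d e)"

text \<open>Canonical subalgebra: norm-closed subalgebra A such that, for some AF presentation
  with compatible matrix units, each A_k = A \<inter> B_k contains the diagonal matrix units
  and is spanned by the matrix units it contains (a CSL subalgebra of B_k), and the
  union of the A_k is norm dense in A.\<close>

definition canonical_subalgebra :: "'a::cstar_algebra set \<Rightarrow> bool" where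
  "canonical_subalgebra A \<longleftrightarrow> complex_subalgebra A \<and> closed A \<and>
     (\<exists>r d e. af_system r d e \<and>
        (\<forall>k. e k ` mu_diag (r k) (d k) \<subseteq> A) \<and>
        (\<forall>k. A \<inter> af_block r d e k = cspan (e k ` mu_idx (r k) (d k) \<inter> A)) \<and>
        closure (\<Union>k. A \<inter> af_block r d e k) = A)"

end

theory Submission imports Defs begin

(* Put c = \<delta>(I).  Polarizing the identity
     (m+n+l) \<delta>(A\<^sup>2) = m \<delta>(A)A + n A\<delta>(A) + l A c A
   at A and A + I gives the explicit formula
     (m+n+2l) \<delta>(A) = (m+l) cA + (n+l) Ac,
   and substituting this back into the identity at A shows, since (m+l)(n+l) \<noteq> 0,
     c A\<^sup>2 + A\<^sup>2 c = 2 A c A   for every A in the subalgebra.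
   This relation forces c to commute with every idempotent of the subalgebra, and
   then with every matrix unit E of square zero for which E + (a diagonal unit) is
   again an idempotent in the subalgebra.  The canonical subalgebra is the closure of
   the spans of the matrix units it contains, so c commutes with all of it.  Then
   \<delta>(A) = cA = Ac, from which both claimed identities follow at once. *)

text \<open>Subtracting the identity at \<open>a\<close> from the identity at \<open>a + 1\<close> (here \<open>d = \<delta> a\<close>,
  \<open>da2 = \<delta> (a*a)\<close>, \<open>c = \<delta> 1\<close>) leaves an explicit formula for \<open>\<delta> a\<close>.\<close>

lemma polarized_identity:
  fixes c a d da2 :: "'a::real_algebra_1" and m n l :: real
  assumes at_a1: "(m+n+l) *\<^sub>R (da2 + 2 *\<^sub>R d + c)
      = m *\<^sub>R ((d + c)*(a+1)) + n *\<^sub>R ((a+1)*(d+c)) + l *\<^sub>R ((a+1)*c*(a+1))"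
    and at_a: "(m+n+l) *\<^sub>R da2 = m *\<^sub>R (d*a) + n *\<^sub>R (a*d) + l *\<^sub>R (a*c*a)"
  shows "(m+n+2*l) *\<^sub>R d = (m+l) *\<^sub>R (c*a) + (n+l) *\<^sub>R (a*c)"
proof -
  have "(m+n+l) *\<^sub>R (da2 + 2 *\<^sub>R d + c) - (m+n+l) *\<^sub>R da2
      = m *\<^sub>R ((d + c)*(a+1)) + n *\<^sub>R ((a+1)*(d+c)) + l *\<^sub>R ((a+1)*c*(a+1))
        - (m *\<^sub>R (d*a) + n *\<^sub>R (a*d) + l *\<^sub>R (a*c*a))"
    using at_a1 at_a by simp
  then have "(m+n+l) *\<^sub>R (d + d) = (m + n) *\<^sub>R d + ((m+l) *\<^sub>R (c*a) + (n+l) *\<^sub>R (a*c))"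
    by (simp add: algebra_simps scaleR_2)
  moreover have "(m+n+l) *\<^sub>R (d + d) = (m + n) *\<^sub>R d + (m+n+2*l) *\<^sub>R d"
    by (simp only: scaleR_add_right scaleR_add_left[symmetric]) (simp add: algebra_simps)
  ultimately show ?thesis by simp
qed

text \<open>Feeding the explicit formula for \<open>\<delta> a\<close> and for \<open>\<delta> (a*a)\<close> back into the identity at
  \<open>a\<close> yields the Jordan-type relation \<open>c a\<^sup>2 + a\<^sup>2 c = 2 a c a\<close>, up to the factor
  \<open>(m+l)(n+l)\<close>.\<close>

lemma jordan_relation_scaled:
  fixes c a d da2 :: "'a::real_algebra_1" and m n l :: real
  assumes formula_a: "(m+n+2*l) *\<^sub>R d = (m+l) *\<^sub>R (c*a) + (n+l) *\<^sub>R (a*c)"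
    and formula_aa: "(m+n+2*l) *\<^sub>R da2 = (m+l) *\<^sub>R (c*(a*a)) + (n+l) *\<^sub>R ((a*a)*c)"
    and at_a: "(m+n+l) *\<^sub>R da2 = m *\<^sub>R (d*a) + n *\<^sub>R (a*d) + l *\<^sub>R (a*c*a)"
  shows "((m+l)*(n+l)) *\<^sub>R (c*(a*a) + (a*a)*c) = ((m+l)*(n+l)) *\<^sub>R (2 *\<^sub>R (a*c*a))"
proof -
  let ?t = "m+n+2*l" and ?s = "m+n+l"
  have "?s *\<^sub>R (?t *\<^sub>R da2) = ?t *\<^sub>R (?s *\<^sub>R da2)" by simp
  also have "\<dots> = m *\<^sub>R ((?t *\<^sub>R d)*a) + n *\<^sub>R (a*(?t *\<^sub>R d)) + (?t*l) *\<^sub>R (a*c*a)"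
    unfolding at_a by (simp add: algebra_simps)
  finally have e: "?s *\<^sub>R ((m+l) *\<^sub>R (c*(a*a)) + (n+l) *\<^sub>R ((a*a)*c))
      = m *\<^sub>R (((m+l) *\<^sub>R (c*a) + (n+l) *\<^sub>R (a*c))*a)
        + n *\<^sub>R (a*((m+l) *\<^sub>R (c*a) + (n+l) *\<^sub>R (a*c))) + (?t*l) *\<^sub>R (a*c*a)"
    unfolding formula_a formula_aa .
  have collected: "(?s*(m+l)) *\<^sub>R (c*(a*a)) + (?s*(n+l)) *\<^sub>R ((a*a)*c)
      = (m*(m+l)) *\<^sub>R (c*(a*a)) + (n*(n+l)) *\<^sub>R ((a*a)*c)
        + (m*(n+l) + n*(m+l) + ?t*l) *\<^sub>R (a*c*a)"
  proof -
    have "(m*(n+l)) *\<^sub>R (a*c*a) + (n*(m+l)) *\<^sub>R (a*c*a) + (?t*l) *\<^sub>R (a*c*a)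
        = (m*(n+l) + n*(m+l) + ?t*l) *\<^sub>R (a*c*a)"
      by (simp only: scaleR_add_left[symmetric])
    moreover have "m *\<^sub>R (((m+l) *\<^sub>R (c*a) + (n+l) *\<^sub>R (a*c))*a)
        + n *\<^sub>R (a*((m+l) *\<^sub>R (c*a) + (n+l) *\<^sub>R (a*c))) + (?t*l) *\<^sub>R (a*c*a)
      = (m*(m+l)) *\<^sub>R (c*(a*a)) + (n*(n+l)) *\<^sub>R ((a*a)*c)
        + ((m*(n+l)) *\<^sub>R (a*c*a) + (n*(m+l)) *\<^sub>R (a*c*a) + (?t*l) *\<^sub>R (a*c*a))"
      by (simp add: scaleR_add_right distrib_right distrib_left mult.assoc add_ac)
    ultimately show ?thesis
      using e by (simp add: scaleR_add_right)
  qed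
  have split_left: "(?s*(m+l)) *\<^sub>R (c*(a*a)) = (m*(m+l)) *\<^sub>R (c*(a*a)) + ((m+l)*(n+l)) *\<^sub>R (c*(a*a))"
    by (simp only: scaleR_add_left[symmetric]) (simp add: algebra_simps)
  have split_right: "(?s*(n+l)) *\<^sub>R ((a*a)*c) = (n*(n+l)) *\<^sub>R ((a*a)*c) + ((m+l)*(n+l)) *\<^sub>R ((a*a)*c)"
    by (simp only: scaleR_add_left[symmetric]) (simp add: algebra_simps)
  have "((m+l)*(n+l)) *\<^sub>R (c*(a*a) + (a*a)*c)
      = (?s*(m+l)) *\<^sub>R (c*(a*a)) + (?s*(n+l)) *\<^sub>R ((a*a)*c)
        - (m*(m+l)) *\<^sub>R (c*(a*a)) - (n*(n+l)) *\<^sub>R ((a*a)*c)"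
    unfolding split_left split_right by (simp add: scaleR_add_right)
  also have "\<dots> = (m*(n+l) + n*(m+l) + ?t*l) *\<^sub>R (a*c*a)"
    unfolding collected by simp
  also have "\<dots> = ((m+l)*(n+l)) *\<^sub>R (2 *\<^sub>R (a*c*a))"
    by (simp add: algebra_simps)
  finally show ?thesis .
qed

lemma identity_explicit_formula:
  fixes \<delta> :: "'a::real_algebra_1 \<Rightarrow> 'a" and m n l :: nat
  assumes one: "1 \<in> A"
    and add_closed: "\<forall>x\<in>A. \<forall>y\<in>A. x + y \<in> A"
    and mult_closed: "\<forall>x\<in>A. \<forall>y\<in>A. x * y \<in> A"
    and additive: "\<forall>x\<in>A. \<forall>y\<in>A. \<delta> (x + y) = \<delta> x + \<delta> y"
    and identity: "\<forall>a\<in>A. real (m + n + l) *\<^sub>R \<delta> (a * a) =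
           real m *\<^sub>R (\<delta> a * a) + real n *\<^sub>R (a * \<delta> a) + real l *\<^sub>R (a * \<delta> 1 * a)"
    and a: "a \<in> A"
  shows "(real m + real n + 2 * real l) *\<^sub>R \<delta> a
      = (real m + real l) *\<^sub>R (\<delta> 1 * a) + (real n + real l) *\<^sub>R (a * \<delta> 1)"
proof (rule polarized_identity)
  have aa: "a*a \<in> A" and a2: "a + a \<in> A" and a1: "a + 1 \<in> A"
    using a one add_closed mult_closed by blast+
  have "\<delta> ((a+1)*(a+1)) = \<delta> (a*a + (a + a) + 1)"
    by (simp add: algebra_simps)
  also have "\<dots> = \<delta> (a*a) + 2 *\<^sub>R \<delta> a + \<delta> 1"
    using additive aa a2 a one add_closed by (simp add: scaleR_2)
  finally have square: "\<delta> ((a+1)*(a+1)) = \<delta> (a*a) + 2 *\<^sub>R \<delta> a + \<delta> 1" .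
  have shift: "\<delta> (a+1) = \<delta> a + \<delta> 1"
    using additive a one by blast
  show "(real m + real n + real l) *\<^sub>R (\<delta> (a*a) + 2 *\<^sub>R \<delta> a + \<delta> 1)
      = real m *\<^sub>R ((\<delta> a + \<delta> 1)*(a+1)) + real n *\<^sub>R ((a+1)*(\<delta> a + \<delta> 1))
        + real l *\<^sub>R ((a+1)*\<delta> 1*(a+1))"
  proof -
    have "real (m + n + l) *\<^sub>R \<delta> ((a+1)*(a+1)) = real m *\<^sub>R (\<delta> (a+1)*(a+1))
        + real n *\<^sub>R ((a+1)*\<delta> (a+1)) + real l *\<^sub>R ((a+1)*\<delta> 1*(a+1))"
      using identity a1 by blast
    then show ?thesis unfolding square shift by simp
  qed
  show "(real m + real n + real l) *\<^sub>R \<delta> (a*a)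
      = real m *\<^sub>R (\<delta> a*a) + real n *\<^sub>R (a*\<delta> a) + real l *\<^sub>R (a*\<delta> 1*a)"
    using identity a by simp
qed

lemma identity_jordan_relation:
  fixes \<delta> :: "'a::real_algebra_1 \<Rightarrow> 'a" and m n l :: nat
  assumes "m + l \<ge> 1" and "n + l \<ge> 1"
    and one: "1 \<in> A"
    and add_closed: "\<forall>x\<in>A. \<forall>y\<in>A. x + y \<in> A"
    and mult_closed: "\<forall>x\<in>A. \<forall>y\<in>A. x * y \<in> A"
    and additive: "\<forall>x\<in>A. \<forall>y\<in>A. \<delta> (x + y) = \<delta> x + \<delta> y"
    and identity: "\<forall>a\<in>A. real (m + n + l) *\<^sub>R \<delta> (a * a) =
           real m *\<^sub>R (\<delta> a * a) + real n *\<^sub>R (a * \<delta> a) + real l *\<^sub>R (a * \<delta> 1 * a)"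
    and a: "a \<in> A"
  shows "\<delta> 1 * (a*a) + (a*a) * \<delta> 1 = 2 *\<^sub>R (a * \<delta> 1 * a)"
proof -
  note formula = identity_explicit_formula[OF one add_closed mult_closed additive identity]
  have "a*a \<in> A" using a mult_closed by blast
  then have "((real m + real l)*(real n + real l)) *\<^sub>R (\<delta> 1 * (a*a) + (a*a) * \<delta> 1)
      = ((real m + real l)*(real n + real l)) *\<^sub>R (2 *\<^sub>R (a * \<delta> 1 * a))"
    using jordan_relation_scaled[OF formula[OF a] formula] identity a by simp
  moreover have "(real m + real l)*(real n + real l) \<noteq> 0"
    using assms(1,2) by simp
  ultimately show ?thesis using scaleR_cancel_left by blast
qed

text \<open>The Jordan-type relation \<open>c p\<^sup>2 + p\<^sup>2 c = 2 p c p\<close> at an idempotent \<open>p\<close> forces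
  \<open>cp = pcp = pc\<close>.\<close>

lemma idempotent_commutes:
  fixes c p :: "'a::real_algebra_1"
  assumes idem: "p*p = p" and jordan: "c*(p*p) + (p*p)*c = 2 *\<^sub>R (p*c*p)"
  shows "c*p = p*c"
proof -
  have rel: "c*p + p*c = p*c*p + p*c*p" using jordan idem by (simp add: scaleR_2)
  have "p*(c*p + p*c) = p*(p*c*p + p*c*p)" using rel by simp
  hence "p*c*p + p*c = p*c*p + p*c*p" using idem by (simp add: distrib_left mult.assoc[symmetric])
  hence left: "p*c = p*c*p" by simp
  have "(c*p + p*c)*p = (p*c*p + p*c*p)*p" using rel by simp
  hence "c*p + p*c*p = p*c*p + p*c*p" using idem by (simp add: distrib_right mult.assoc)
  hence right: "c*p = p*c*p" by simp
  show ?thesis using left right by simp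
qed

text \<open>An off-diagonal matrix unit \<open>x = e_ij\<close> (\<open>i \<noteq> j\<close>) together with \<open>q = e_jj\<close> satisfies
  \<open>x\<^sup>2 = 0\<close>, \<open>xq = x\<close>, \<open>qx = 0\<close>, so \<open>x + q\<close> is idempotent; if \<open>c\<close> commutes with \<open>q\<close>, the
  Jordan-type relations at \<open>x\<close> and at \<open>x + q\<close> make \<open>c\<close> commute with \<open>x\<close>.\<close>

lemma nilpotent_unit_commutes:
  fixes c x q :: "'a::real_algebra_1"
  assumes xx: "x*x = 0" and qq: "q*q = q" and xq: "x*q = x" and qx: "q*x = 0"
    and cq: "c*q = q*c"
    and jordan_x: "c*(x*x) + (x*x)*c = 2 *\<^sub>R (x*c*x)"
    and jordan_xq: "c*((x+q)*(x+q)) + ((x+q)*(x+q))*c = 2 *\<^sub>R ((x+q)*c*(x+q))"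
  shows "c*x = x*c"
proof -
  have xcx: "x*c*x = 0" using jordan_x xx by simp
  have idem: "(x+q)*(x+q) = x + q" using xx qq xq qx by (simp add: distrib_left distrib_right)
  have "(x+q)*c*(x+q) = x*c*x + x*c*q + q*c*x + q*c*q"
    by (simp add: distrib_left distrib_right add.assoc)
  also have "x*c*q = x*c" using cq xq by (metis mult.assoc)
  also have "q*c*x = 0" using cq qx by (metis mult.assoc mult_zero_right)
  also have "q*c*q = q*c" using cq qq by (metis mult.assoc)
  finally have sandwich: "(x+q)*c*(x+q) = x*c + q*c" using xcx by simp
  have "c*x + c*q + (x*c + q*c) = (x*c + q*c) + (x*c + q*c)"
    using jordan_xq unfolding idem sandwich by (simp add: scaleR_2 distrib_left distrib_right)
  thus ?thesis using cq by (simp add: algebra_simps)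
qed

lemma matrix_unit_commutes:
  fixes c :: "'a::cstar_algebra"
  assumes mu: "matrix_units r d e" and sij: "(s, i, j) \<in> mu_idx r d"
    and jordan: "\<And>x. x \<in> {e (s,j,j), e (s,i,j), e (s,i,j) + e (s,j,j)} \<Longrightarrow>
        c*(x*x) + (x*x)*c = 2 *\<^sub>R (x*c*x)"
  shows "c * e (s,i,j) = e (s,i,j) * c"
proof -
  have mult: "\<And>s i j s' i' j'. (s, i, j) \<in> mu_idx r d \<Longrightarrow> (s', i', j') \<in> mu_idx r d \<Longrightarrow>
      e (s, i, j) * e (s', i', j') = (if s = s' \<and> j = i' then e (s, i, j') else 0)"
    using mu unfolding matrix_units_def by blast
  have jj: "(s,j,j) \<in> mu_idx r d" using sij unfolding mu_idx_def by auto
  have qq: "e (s,j,j) * e (s,j,j) = e (s,j,j)" using mult[OF jj jj] by simp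
  have cq: "c * e (s,j,j) = e (s,j,j) * c"
    using idempotent_commutes[OF qq jordan] by simp
  show ?thesis
  proof (cases "i = j")
    case True
    then show ?thesis using cq by simp
  next
    case False
    show ?thesis
    proof (rule nilpotent_unit_commutes[OF _ qq _ _ cq])
      show "e (s,i,j) * e (s,i,j) = 0" using mult[OF sij sij] False by simp
      show "e (s,i,j) * e (s,j,j) = e (s,i,j)" using mult[OF sij jj] by simp
      show "e (s,j,j) * e (s,i,j) = 0" using mult[OF jj sij] False by simp
    qed (use jordan in auto)
  qed
qed

text \<open>The commutant of an element is a closed complex subspace, so commuting with a set
  passes to its complex span and to its norm closure.\<close>

lemma commutes_with_cspan:
  fixes c :: "'a::cstar_algebra"
  assumes "\<forall>y\<in>S. c * y = y * c" and "x \<in> cspan S"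
  shows "c * x = x * c"
proof -
  obtain F k where F: "finite F" "F \<subseteq> S" and x: "x = (\<Sum>y\<in>F. cmult (k y) y)"
    using assms(2) unfolding cspan_def by blast
  have "\<forall>y\<in>F. c * y = y * c" using F(2) assms(1) by blast
  then show ?thesis unfolding x
    by (simp add: sum_distrib_left sum_distrib_right mult_cmult_left mult_cmult_right)
qed

lemma commutes_with_closure:
  fixes c :: "'a::real_normed_algebra"
  assumes "\<forall>y\<in>S. c * y = y * c" and "x \<in> closure S"
  shows "c * x = x * c"
proof -
  have "closed {y. c * y = y * c}"
    by (intro closed_Collect_eq continuous_intros)
  then have "closure S \<subseteq> {y. c * y = y * c}"
    using assms(1) by (intro closure_minimal) auto
  then show ?thesis using assms(2) by blast
qed

lemma complex_subalgebra_sum: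
  assumes "complex_subalgebra A" and "\<forall>x\<in>F. f x \<in> A"
  shows "sum f F \<in> A"
proof (cases "finite F")
  case True
  then show ?thesis using assms(2)
    by (induction F rule: finite_induct) (use assms(1) in \<open>auto simp: complex_subalgebra_def\<close>)
next
  case False
  then show ?thesis using assms(1) by (simp add: complex_subalgebra_def)
qed

text \<open>A canonical subalgebra is unital: \<open>I\<close> is the sum of the diagonal matrix units of
  the first block, all of which lie in the subalgebra.\<close>

lemma canonical_subalgebra_one:
  assumes "canonical_subalgebra A"
  shows "1 \<in> A"
proof -
  obtain r d e where af: "af_system r d e" and diag: "\<forall>k. e k ` mu_diag (r k) (d k) \<subseteq> A"
    using assms unfolding canonical_subalgebra_def by blast
  have "sum (e 0) (mu_diag (r 0) (d 0)) \<in> A"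
    using assms diag unfolding canonical_subalgebra_def
    by (intro complex_subalgebra_sum) (auto simp: image_subset_iff)
  moreover have "matrix_units (r 0) (d 0) (e 0)" using af unfolding af_system_def by blast
  ultimately show ?thesis unfolding matrix_units_def by simp
qed

text \<open>It commutes with every
  matrix unit in the subalgebra, hence with each \<open>A \<inter> B_k\<close> (spanned by such units),
  hence with the closure of their union, which is the whole subalgebra.\<close>

lemma canonical_subalgebra_jordan_commutes:
  fixes c :: "'a::cstar_algebra"
  assumes canon: "canonical_subalgebra A"
    and jordan: "\<forall>x\<in>A. c*(x*x) + (x*x)*c = 2 *\<^sub>R (x*c*x)"
    and x: "x \<in> A"
  shows "c * x = x * c"
proof -
  obtain r d e where af: "af_system r d e"
    and diag: "\<forall>k. e k ` mu_diag (r k) (d k) \<subseteq> A"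
    and block: "\<forall>k. A \<inter> af_block r d e k = cspan (e k ` mu_idx (r k) (d k) \<inter> A)"
    and dense: "closure (\<Union>k. A \<inter> af_block r d e k) = A"
    using canon unfolding canonical_subalgebra_def by blast
  have add_closed: "\<forall>x\<in>A. \<forall>y\<in>A. x + y \<in> A"
    using canon unfolding canonical_subalgebra_def complex_subalgebra_def by blast
  have units: "c * e k p = e k p * c" if p: "p \<in> mu_idx (r k) (d k)" and pA: "e k p \<in> A" for k p
  proof -
    obtain s i j where pij: "p = (s,i,j)" by (cases p)
    have "e k (s,j,j) \<in> A"
      using diag p pij unfolding mu_diag_def mu_idx_def by blast
    moreover have "matrix_units (r k) (d k) (e k)" using af unfolding af_system_def by blast
    ultimately show ?thesis
      using matrix_unit_commutes[of "r k" "d k" "e k" s i j c] p pA pij jordan add_closed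
      by auto
  qed
  have "\<forall>y\<in>(\<Union>k. A \<inter> af_block r d e k). c * y = y * c"
    using block units commutes_with_cspan[of "e _ ` mu_idx (r _) (d _) \<inter> A" c] by blast
  then show ?thesis
    using commutes_with_closure x dense by blast
qed

theorem theorem3p8:
  fixes m n l :: nat
    and \<A> :: "'a::cstar_algebra set"
    and \<delta> :: "'a \<Rightarrow> 'a"
  assumes "m + l \<ge> 1" and "n + l \<ge> 1"
    and "AF_algebra TYPE('a)"
    and "canonical_subalgebra \<A>"
    and "\<forall>x\<in>\<A>. \<forall>y\<in>\<A>. \<delta> (x + y) = \<delta> x + \<delta> y"
    and "\<forall>c. \<forall>x\<in>\<A>. \<delta> (cmult c x) = cmult c (\<delta> x)"
    and "\<exists>K. \<forall>x\<in>\<A>. norm (\<delta> x) \<le> K * norm x"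
    and "\<forall>a\<in>\<A>. real (m + n + l) *\<^sub>R \<delta> (a * a) =
           real m *\<^sub>R (\<delta> a * a) + real n *\<^sub>R (a * \<delta> a) + real l *\<^sub>R (a * \<delta> 1 * a)"
  shows "\<forall>a\<in>\<A>. \<forall>b\<in>\<A>. \<delta> (a * b) = \<delta> a * b \<and> \<delta> a * b = a * \<delta> b"
proof -
  have one: "1 \<in> \<A>" using assms(4) by (rule canonical_subalgebra_one)
  have add_closed: "\<forall>x\<in>\<A>. \<forall>y\<in>\<A>. x + y \<in> \<A>" and mult_closed: "\<forall>x\<in>\<A>. \<forall>y\<in>\<A>. x * y \<in> \<A>"
    using assms(4) unfolding canonical_subalgebra_def complex_subalgebra_def by blast+
  note formula = identity_explicit_formula[OF one add_closed mult_closed assms(5,8)]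
  have commutes: "\<delta> 1 * x = x * \<delta> 1" if "x \<in> \<A>" for x
    using canonical_subalgebra_jordan_commutes[OF assms(4) _ that]
      identity_jordan_relation[OF assms(1,2) one add_closed mult_closed assms(5,8)] by blast
  have left_mult: "\<delta> a = \<delta> 1 * a" if a: "a \<in> \<A>" for a
  proof -
    have coeff: "real m + real n + 2 * real l = (real m + real l) + (real n + real l)"
      by simp
    have "(real m + real n + 2 * real l) *\<^sub>R \<delta> a = (real m + real n + 2 * real l) *\<^sub>R (\<delta> 1 * a)"
      using formula[OF a] commutes[OF a] unfolding coeff scaleR_add_left by simp
    then show ?thesis using assms(1) by simp
  qed
  show ?thesis
  proof (intro ballI conjI)
    fix a b assume a: "a \<in> \<A>" and b: "b \<in> \<A>"
    show "\<delta> (a * b) = \<delta> a * b"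
      using left_mult[OF a] left_mult[OF mult_closed[rule_format, OF a b]] by (simp add: mult.assoc)
    show "\<delta> a * b = a * \<delta> b"
      using left_mult[OF a] left_mult[OF b] commutes[OF a] by (metis mult.assoc)
  qed
qed

end
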